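(* Let $(M,\Sigma_M,\mu,T)$ be an ergodic measure-preserving deterministic system. Assume there do not exist $n\in\mathbb{N}$ and $C\in\Sigma_M$ with $0<\mu(C)<1$ such that $\mu\big(T^n(C)\,\triangle\, C\big)=0$. Let $\Phi:M\to M_O$ be any nontrivial finite-valued observation function, and let $Z_t:=\Phi\circ T^t$, $t\in\mathbb{Z}$. Then there is an observed value $o_i\in M_O$ such that for every $o_j\in M_O$ and every $t\in\mathbb{Z}$, $$P\{Z_{t+1}=o_j\mid Z_t=o_i\}:=\frac{\mu(\{m: \Phi(T^{t}m)=o_i,\ \Phi(T^{t+1}m)=o_j\})}{\mu(\{m:\Phi(T^t m)=o_i\})}<1.$$
   Context: A deterministic system is a quadruple $(M,\Sigma_M,\mu,T)$ where $(M,\Sigma_M,\mu)$ is a (complete) probability space and $T:M\to M$ is a bijection such that $T$ and $T^{-1}$ are measurable. It is measure-preserving if $\mu(T(A))=\mu(A)$ for all $A\in\Sigma_M$. It is ergodic if every $A\in\Sigma_M$ with $\mu(T(A)\triangle A)=0$ has $\mu(A)\in\{0,1\}$ (equivalently, $\lim_{n\to\infty}\frac1n\sum_{i=0}^{n-1}(\mu(T^i(A)\cap B)-\mu(A)\mu(B))=0$ for all $A,B\in\Sigma_M$). A partition of $(M,\Sigma_M,\mu)$ is a finite set $\alpha=\{\alpha_1,\dots,\alpha_n\}$ of pairwise disjoint sets $\alpha_i\in\Sigma_M$ with $\mu(\alpha_i)>0$ and $\bigcup_i\alpha_i=M$; it is nontrivial if $n\ge 2$. A finite-valued observation function is a map $\Phi=\sum_{i=1}^n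 o_i\chi_{\alpha_i}$ for some partition $\alpha$ and distinct values $o_1,\dots,o_n$, with $M_O=\{o_1,\dots,o_n\}$; it is nontrivial if its partition is nontrivial. *)

theory Defs
  imports "HOL-Probability.Probability"
begin

definition det_system :: "'a measure \<Rightarrow> ('a \<Rightarrow> 'a) \<Rightarrow> bool" where
  "det_system M T \<longleftrightarrow> prob_space M \<and> complete_measure M \<and>
     bij_betw T (space M) (space M) \<and> T \<in> M \<rightarrow>\<^sub>M M \<and>
     the_inv_into (space M) T \<in> M \<rightarrow>\<^sub>M M"

definition measure_preserving :: "'a measure \<Rightarrow> ('a \<Rightarrow> 'a) \<Rightarrow> bool" where
  "measure_preserving M T \<longleftrightarrow> (\<forall>A\<in>sets M. measure M (T ` A) = measure M A)"

definition symdiff :: "'a set \<Rightarrow> 'a set \<Rightarrow> 'a set" where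
  "symdiff A B = (A - B) \<union> (B - A)"

definition ergodic :: "'a measure \<Rightarrow> ('a \<Rightarrow> 'a) \<Rightarrow> bool" where
  "ergodic M T \<longleftrightarrow> (\<forall>A\<in>sets M. measure M (symdiff (T ` A) A) = 0 \<longrightarrow>
                       measure M A = 0 \<or> measure M A = 1)"

definition Tpow :: "'a measure \<Rightarrow> ('a \<Rightarrow> 'a) \<Rightarrow> int \<Rightarrow> 'a \<Rightarrow> 'a" where
  "Tpow M T t = (if 0 \<le> t then T ^^ nat t else (the_inv_into (space M) T) ^^ nat (- t))"

definition partition :: "'a measure \<Rightarrow> 'a set set \<Rightarrow> bool" where
  "partition M \<alpha> \<longleftrightarrow> finite \<alpha> \<and> \<alpha> \<subseteq> sets M \<and>
     (\<forall>A\<in>\<alpha>. \<forall>B\<in>\<alpha>. A \<noteq> B \<longrightarrow> A \<inter> B = {}) \<and>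
     (\<forall>A\<in>\<alpha>. measure M A > 0) \<and> \<Union>\<alpha> = space M"

definition finite_obs :: "'a measure \<Rightarrow> 'a set set \<Rightarrow> ('a \<Rightarrow> real) \<Rightarrow> bool" where
  "finite_obs M \<alpha> \<Phi> \<longleftrightarrow> partition M \<alpha> \<and>
     (\<exists>val. inj_on val \<alpha> \<and> (\<forall>x\<in>space M. \<Phi> x = (\<Sum>A\<in>\<alpha>. val A * indicator A x)))"

definition nontrivial_finite_obs :: "'a measure \<Rightarrow> ('a \<Rightarrow> real) \<Rightarrow> bool" where
  "nontrivial_finite_obs M \<Phi> \<longleftrightarrow> (\<exists>\<alpha>. finite_obs M \<alpha> \<Phi> \<and> card \<alpha> \<ge> 2)"

end

theory Submission
  imports Defs
begin

text \<open>If for every cell A of the partition the image T(A) lay, up to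
  a null set, inside a single cell f(A), then following f from a cell of maximal measure the
  measures could never drop, so T would map these cells onto each other up to null sets. By
  finiteness the orbit of cells recurs, giving a cell C with 0 < \<mu>(C) < 1 and
  \<mu>(T^n(C) \<triangle> C) = 0, which aperiodicity forbids. So some cell A has
  \<mu>(T(A) - B) > 0 for every cell B, and by invariance of \<mu> under T^t this is the
  statement that the transition probability from the value on A to any value is below 1.\<close>

lemma measure_symdiff_triangle:
  assumes "finite_measure M" "X \<in> sets M" "Y \<in> sets M" "Z \<in> sets M"
  shows "measure M (symdiff X Z) \<le> measure M (symdiff X Y) + measure M (symdiff Y Z)"
proof -
  interpret finite_measure M by fact
  have "measure M (symdiff X Z) \<le> measure M (symdiff X Y \<union> symdiff Y Z)"
    using assms by (intro finite_measure_mono) (auto simp: symdiff_def)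
  also have "\<dots> \<le> measure M (symdiff X Y) + measure M (symdiff Y Z)"
    using assms by (intro measure_subadditive) (auto simp: symdiff_def emeasure_finite)
  finally show ?thesis .
qed

lemma measurable_funpow: "f \<in> M \<rightarrow>\<^sub>M M \<Longrightarrow> f ^^ n \<in> M \<rightarrow>\<^sub>M M"
  by (induction n) (auto intro: measurable_comp)

lemma measure_vimage_funpow:
  assumes f: "f \<in> M \<rightarrow>\<^sub>M M"
    and preserving: "\<And>B. B \<in> sets M \<Longrightarrow> measure M (f -` B \<inter> space M) = measure M B"
    and B: "B \<in> sets M"
  shows "measure M ((f ^^ n) -` B \<inter> space M) = measure M B"
  using B
proof (induction n arbitrary: B)
  case 0
  then show ?case by (simp add: Int_absorb1 sets.sets_into_space)
next
  case (Suc n)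
  have "(f ^^ Suc n) -` B \<inter> space M = (f ^^ n) -` (f -` B \<inter> space M) \<inter> space M"
    using measurable_space[OF measurable_funpow[OF f]] by auto
  also have "measure M \<dots> = measure M (f -` B \<inter> space M)"
    using f Suc by (intro Suc.IH) measurable
  finally show ?case
    using preserving[OF Suc.prems] by (simp add: comp_def)
qed

lemma finite_range_recurs:
  fixes a :: "nat \<Rightarrow> 'a"
  assumes "finite (range a)"
  obtains p n where "0 < n" "a (p + n) = a p"
proof -
  have "\<not> inj a"
    using assms range_inj_infinite by blast
  then obtain p q where "a p = a q" "p < q"
    unfolding inj_def by (metis linorder_neqE_nat)
  then show ?thesis
    using that[of "q - p" p] by simp
qed

lemma finite_obs_eq_val_iff:
  fixes val :: "'a set \<Rightarrow> real"
  assumes "partition M \<alpha>" "inj_on val \<alpha>"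
    and \<Phi>: "\<forall>x\<in>space M. \<Phi> x = (\<Sum>A\<in>\<alpha>. val A * indicator A x)"
    and A: "A \<in> \<alpha>" and x: "x \<in> space M"
  shows "\<Phi> x = val A \<longleftrightarrow> x \<in> A"
proof -
  have fin: "finite \<alpha>" and cover: "\<Union>\<alpha> = space M"
    and disj: "\<And>A B. A \<in> \<alpha> \<Longrightarrow> B \<in> \<alpha> \<Longrightarrow> A \<noteq> B \<Longrightarrow> A \<inter> B = {}"
    using assms(1) unfolding partition_def by auto
  obtain B where B: "B \<in> \<alpha>" "x \<in> B"
    using cover x by blast
  have "val C * indicator C x = (if C = B then val C else 0)" if "C \<in> \<alpha>" for C
    using B disj[OF that B(1)] by (cases "C = B") (auto simp: indicator_def)
  then have "\<Phi> x = (\<Sum>C\<in>\<alpha>. if C = B then val C else 0)"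
    using \<Phi> x by (simp cong: sum.cong)
  then have "\<Phi> x = val B"
    using fin B by simp
  then show ?thesis
    using B A disj[of A B] inj_onD[OF assms(2)] by auto
qed

lemma finite_obs_image:
  fixes val :: "'a set \<Rightarrow> real"
  assumes part: "partition M \<alpha>" and val: "inj_on val \<alpha>"
    and \<Phi>: "\<forall>x\<in>space M. \<Phi> x = (\<Sum>A\<in>\<alpha>. val A * indicator A x)"
  shows "\<Phi> ` space M = val ` \<alpha>"
proof -
  have level: "\<And>A x. A \<in> \<alpha> \<Longrightarrow> x \<in> space M \<Longrightarrow> \<Phi> x = val A \<longleftrightarrow> x \<in> A"
    using part val \<Phi> by (rule finite_obs_eq_val_iff)
  have cover: "\<Union>\<alpha> = space M" and nonempty: "\<And>A. A \<in> \<alpha> \<Longrightarrow> A \<noteq> {}"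
    using part unfolding partition_def by force+
  show ?thesis
  proof (intro equalityI subsetI)
    fix y
    assume "y \<in> \<Phi> ` space M"
    then obtain x B where "x \<in> space M" "y = \<Phi> x" "B \<in> \<alpha>" "x \<in> B"
      using cover by blast
    then show "y \<in> val ` \<alpha>"
      using level by blast
  next
    fix y
    assume "y \<in> val ` \<alpha>"
    then obtain A x where "A \<in> \<alpha>" "y = val A" "x \<in> A"
      using nonempty by blast
    moreover have "x \<in> space M"
      using cover \<open>A \<in> \<alpha>\<close> \<open>x \<in> A\<close> by blast
    ultimately have "y = \<Phi> x"
      using level[of A x] by simp
    with \<open>x \<in> space M\<close> show "y \<in> \<Phi> ` space M"
      by blast
  qed
qed

lemma (in prob_space) partition_measure_less_1:
  assumes "partition M \<alpha>" "2 \<le> card \<alpha>" "A \<in> \<alpha>"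
  shows "measure M A < 1"
proof -
  have "\<alpha> - {A} \<noteq> {}"
  proof
    assume "\<alpha> - {A} = {}"
    then have "card \<alpha> \<le> card {A}"
      by (intro card_mono) auto
    then show False
      using assms(2) by simp
  qed
  then obtain B where B: "B \<in> \<alpha>" "B \<noteq> A"
    by blast
  have "measure M A + measure M B = measure M (A \<union> B)"
    using assms(1,3) B unfolding partition_def by (intro finite_measure_Union[symmetric]) auto
  also have "\<dots> \<le> 1"
    by (rule prob_le_1)
  finally show ?thesis
    using assms(1) B unfolding partition_def by auto
qed

locale invertible_mp_system = prob_space M for M :: "'a measure" +
  fixes T :: "'a \<Rightarrow> 'a"
  assumes bij_T: "bij_betw T (space M) (space M)"
    and measurable_T: "T \<in> M \<rightarrow>\<^sub>M M"
    and measurable_inv_T: "the_inv_into (space M) T \<in> M \<rightarrow>\<^sub>M M"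
    and measure_image_T: "A \<in> sets M \<Longrightarrow> measure M (T ` A) = measure M A"
begin

lemma inj_on_T: "inj_on T (space M)"
  using bij_T by (rule bij_betw_imp_inj_on)

lemma image_eq_vimage_inv:
  assumes "X \<subseteq> space M"
  shows "T ` X = the_inv_into (space M) T -` X \<inter> space M"
proof
  show "T ` X \<subseteq> the_inv_into (space M) T -` X \<inter> space M"
    using assms bij_T by (auto simp: the_inv_into_f_f bij_betw_imp_inj_on bij_betw_apply)
  show "the_inv_into (space M) T -` X \<inter> space M \<subseteq> T ` X"
    using bij_T by (force simp: f_the_inv_into_f_bij_betw)
qed

lemma sets_image_T: "X \<in> sets M \<Longrightarrow> T ` X \<in> sets M"
  using image_eq_vimage_inv[OF sets.sets_into_space] measurable_sets[OF measurable_inv_T]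
  by simp

lemma measure_vimage_T:
  assumes B: "B \<in> sets M"
  shows "measure M (T -` B \<inter> space M) = measure M B"
proof -
  have "T ` (T -` B \<inter> space M) = B"
    using bij_T sets.sets_into_space[OF B] by (force simp: bij_betw_def)
  moreover have "T -` B \<inter> space M \<in> sets M"
    using measurable_T B by measurable
  ultimately show ?thesis
    using measure_image_T by metis
qed

lemma measure_vimage_inv_T:
  "B \<in> sets M \<Longrightarrow> measure M (the_inv_into (space M) T -` B \<inter> space M) = measure M B"
  using image_eq_vimage_inv[OF sets.sets_into_space] measure_image_T by metis

lemma measurable_Tpow: "Tpow M T t \<in> M \<rightarrow>\<^sub>M M"
  unfolding Tpow_def using measurable_funpow[OF measurable_T] measurable_funpow[OF measurable_inv_T]
  by simp

lemma Tpow_in_space: "m \<in> space M \<Longrightarrow> Tpow M T t m \<in> space M"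
  using measurable_space[OF measurable_Tpow] .

lemma measure_vimage_Tpow:
  "B \<in> sets M \<Longrightarrow> measure M (Tpow M T t -` B \<inter> space M) = measure M B"
  unfolding Tpow_def
  using measure_vimage_funpow[OF measurable_T measure_vimage_T]
    measure_vimage_funpow[OF measurable_inv_T measure_vimage_inv_T]
  by simp

lemma Tpow_plus_1:
  assumes m: "m \<in> space M"
  shows "Tpow M T (t + 1) m = T (Tpow M T t m)"
proof (cases "0 \<le> t")
  case True
  then have "nat (t + 1) = Suc (nat t)"
    by simp
  with True show ?thesis
    by (simp add: Tpow_def)
next
  case False
  define n where "n = nat (- t) - 1"
  have t: "nat (- t) = Suc n" "t + 1 = - int n"
    using False by (simp_all add: n_def)
  have "Tpow M T (t + 1) m = (the_inv_into (space M) T ^^ n) m"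
    unfolding Tpow_def using t by (cases "n = 0") auto
  moreover have "(the_inv_into (space M) T ^^ n) m \<in> space M"
    using measurable_space[OF measurable_funpow[OF measurable_inv_T] m] .
  ultimately show ?thesis
    using False t(1) by (simp add: Tpow_def f_the_inv_into_f_bij_betw[OF bij_T])
qed

lemma measure_symdiff_image:
  assumes "X \<in> sets M" "Y \<in> sets M"
  shows "measure M (symdiff (T ` X) (T ` Y)) = measure M (symdiff X Y)"
proof -
  have "X \<subseteq> space M" "Y \<subseteq> space M"
    using assms sets.sets_into_space by auto
  then have "symdiff (T ` X) (T ` Y) = T ` symdiff X Y"
    unfolding symdiff_def by (auto simp: image_Un) (metis inj_onD[OF inj_on_T] subsetD)+
  then show ?thesis
    using assms measure_image_T by (simp add: symdiff_def)
qed

lemma sets_funpow_image_T: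
  assumes "X \<in> sets M"
  shows "(T ^^ k) ` X \<in> sets M"
proof (induction k)
  case 0
  then show ?case
    using assms by simp
next
  case (Suc k)
  then have "T ` (T ^^ k) ` X \<in> sets M"
    by (rule sets_image_T)
  then show ?case
    by (simp add: image_image)
qed

lemma measure_le_if_null_image_diff:
  assumes A: "A \<in> sets M" and B: "B \<in> sets M" and null: "measure M (T ` A - B) = 0"
  shows "measure M A \<le> measure M B"
proof -
  have "measure M A = measure M (T ` A \<inter> B)"
    using finite_measure_Diff'[OF sets_image_T[OF A] B] null measure_image_T[OF A] by simp
  also have "\<dots> \<le> measure M B"
    using B by (intro finite_measure_mono) auto
  finally show ?thesis .
qed

lemma measure_symdiff_image_eq_0:
  assumes A: "A \<in> sets M" and B: "B \<in> sets M" and null: "measure M (T ` A - B) = 0"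
    and le: "measure M B \<le> measure M A"
  shows "measure M (symdiff (T ` A) B) = 0"
proof -
  have TA: "T ` A \<in> sets M"
    using A by (rule sets_image_T)
  have "measure M (B - T ` A) = measure M B - measure M (T ` A)"
    using finite_measure_Diff'[OF B TA] finite_measure_Diff'[OF TA B] null
    by (simp add: Int_commute)
  then have "measure M (B - T ` A) = 0"
    using le measure_image_T[OF A] measure_nonneg[of M "B - T ` A"] by linarith
  moreover have "measure M (symdiff (T ` A) B) = measure M (T ` A - B) + measure M (B - T ` A)"
    unfolding symdiff_def using TA B by (intro finite_measure_Union) auto
  ultimately show ?thesis
    using null by simp
qed

lemma measure_symdiff_funpow_image_eq_0:
  assumes sets: "\<And>k. a k \<in> sets M"
    and step: "\<And>k. measure M (symdiff (T ` a k) (a (Suc k))) = 0"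
  shows "measure M (symdiff ((T ^^ k) ` a p) (a (p + k))) = 0"
proof (induction k)
  case 0
  then show ?case
    by (simp add: symdiff_def)
next
  case (Suc k)
  let ?X = "(T ^^ k) ` a p"
  have "measure M (symdiff ((T ^^ Suc k) ` a p) (a (p + Suc k)))
      = measure M (symdiff (T ` ?X) (a (Suc (p + k))))"
    by (simp add: image_image)
  also have "\<dots> \<le> measure M (symdiff (T ` ?X) (T ` a (p + k)))
      + measure M (symdiff (T ` a (p + k)) (a (Suc (p + k))))"
    using sets by (intro measure_symdiff_triangle sets_image_T sets_funpow_image_T) unfold_locales
  also have "\<dots> = 0"
    using Suc step sets by (simp add: measure_symdiff_image sets_funpow_image_T)
  finally show ?case
    by (meson antisym measure_nonneg)
qed

lemma ex_cell_image_not_null_diff: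
  assumes part: "partition M \<alpha>" and card: "2 \<le> card \<alpha>"
    and aperiodic: "\<not> (\<exists>n::nat. \<exists>C\<in>sets M. n \<ge> 1 \<and> 0 < measure M C \<and> measure M C < 1 \<and>
                 measure M (symdiff ((T ^^ n) ` C) C) = 0)"
  shows "\<exists>A\<in>\<alpha>. \<forall>B\<in>\<alpha>. 0 < measure M (T ` A - B)"
proof (rule ccontr)
  have fin: "finite \<alpha>" and sets: "\<alpha> \<subseteq> sets M" and pos: "\<And>A. A \<in> \<alpha> \<Longrightarrow> 0 < measure M A"
    using part unfolding partition_def by auto
  assume "\<not> ?thesis"
  then have "\<forall>A\<in>\<alpha>. \<exists>B\<in>\<alpha>. measure M (T ` A - B) \<le> 0"
    by (simp add: not_less)
  then obtain f where f: "\<And>A. A \<in> \<alpha> \<Longrightarrow> f A \<in> \<alpha>"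
    and "\<And>A. A \<in> \<alpha> \<Longrightarrow> measure M (T ` A - f A) \<le> 0"
    by metis
  then have null: "\<And>A. A \<in> \<alpha> \<Longrightarrow> measure M (T ` A - f A) = 0"
    by (meson antisym measure_nonneg)
  define m where "m = Max (measure M ` \<alpha>)"
  obtain A0 where A0: "A0 \<in> \<alpha>" "measure M A0 = m"
    using Max_in[of "measure M ` \<alpha>"] fin card unfolding m_def by fastforce
  have max: "A \<in> \<alpha> \<Longrightarrow> measure M A \<le> m" for A
    unfolding m_def using fin by simp
  define a where "a k = (f ^^ k) A0" for k
  have a: "a k \<in> \<alpha> \<and> measure M (a k) = m" for k
  proof (induction k)
    case 0
    then show ?case
      using A0 by (simp add: a_def)
  next
    case (Suc k)
    have "a (Suc k) = f (a k)"
      by (simp add: a_def)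
    then have "a (Suc k) \<in> \<alpha>" "measure M (a k) \<le> measure M (a (Suc k))"
      using measure_le_if_null_image_diff[of "a k" "a (Suc k)"] Suc f null sets by auto
    then show ?case
      using Suc max by fastforce
  qed
  have "measure M (symdiff (T ` a k) (a (Suc k))) = 0" for k
    using a[of k] a[of "Suc k"] f null sets
    by (intro measure_symdiff_image_eq_0) (auto simp: a_def)
  then have orbit: "measure M (symdiff ((T ^^ n) ` a p) (a (p + n))) = 0" for p n
    using a sets by (intro measure_symdiff_funpow_image_eq_0) auto
  have "finite (range a)"
    using a fin by (auto intro: finite_subset)
  then obtain p n where "0 < n" "a (p + n) = a p"
    by (rule finite_range_recurs)
  moreover have "a p \<in> sets M" "0 < measure M (a p)" "measure M (a p) < 1"
    using a[of p] sets pos partition_measure_less_1[OF part card] by auto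
  ultimately show False
    using aperiodic orbit[of n p] by force
qed

lemma transition_measure_ratio_less_1:
  assumes A: "A \<in> sets M" and B: "B \<in> sets M" and spread: "0 < measure M (T ` A - B)"
  shows "measure M {m \<in> space M. Tpow M T t m \<in> A \<and> Tpow M T (t + 1) m \<in> B}
           / measure M {m \<in> space M. Tpow M T t m \<in> A} < 1"
proof -
  define X where "X = T -` B \<inter> space M"
  have X: "X \<in> sets M"
    unfolding X_def using measurable_T B by measurable
  have "{m \<in> space M. Tpow M T t m \<in> A \<and> Tpow M T (t + 1) m \<in> B} = Tpow M T t -` (A \<inter> X) \<inter> space M"
    by (auto simp: X_def Tpow_plus_1 Tpow_in_space)
  moreover have "{m \<in> space M. Tpow M T t m \<in> A} = Tpow M T t -` A \<inter> space M"
    by auto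
  moreover have lt: "measure M (A \<inter> X) < measure M A"
  proof -
    have "T ` A - B = T ` (A - X)"
      using sets.sets_into_space[OF A] by (auto simp: X_def)
    then have "measure M (T ` A - B) = measure M A - measure M (A \<inter> X)"
      using A X measure_image_T finite_measure_Diff' by simp
    then show ?thesis
      using spread by simp
  qed
  moreover have "0 < measure M A"
    using lt measure_nonneg[of M "A \<inter> X"] by linarith
  ultimately show ?thesis
    using A X measure_vimage_Tpow[of "A \<inter> X"] measure_vimage_Tpow[of A]
    by (simp del: vimage_Int add: vimage_Int[symmetric])
qed


lemma finite_obs_transition_ratio_less_1:
  fixes val :: "'a set \<Rightarrow> real"
  assumes part: "partition M \<alpha>" and val: "inj_on val \<alpha>"
    and \<Phi>: "\<forall>x\<in>space M. \<Phi> x = (\<Sum>A\<in>\<alpha>. val A * indicator A x)"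
    and A: "A \<in> \<alpha>" and B: "B \<in> \<alpha>" and spread: "0 < measure M (T ` A - B)"
  shows "measure M {m \<in> space M. \<Phi> (Tpow M T t m) = val A \<and> \<Phi> (Tpow M T (t + 1) m) = val B}
           / measure M {m \<in> space M. \<Phi> (Tpow M T t m) = val A} < 1"
proof -
  have level: "\<And>C x. C \<in> \<alpha> \<Longrightarrow> x \<in> space M \<Longrightarrow> \<Phi> x = val C \<longleftrightarrow> x \<in> C"
    using part val \<Phi> by (rule finite_obs_eq_val_iff)
  have "{m \<in> space M. \<Phi> (Tpow M T t m) = val A \<and> \<Phi> (Tpow M T (t + 1) m) = val B}
      = {m \<in> space M. Tpow M T t m \<in> A \<and> Tpow M T (t + 1) m \<in> B}"
    "{m \<in> space M. \<Phi> (Tpow M T t m) = val A} = {m \<in> space M. Tpow M T t m \<in> A}"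
    using level[OF A] level[OF B] Tpow_in_space by blast+
  moreover have "A \<in> sets M" "B \<in> sets M"
    using part A B unfolding partition_def by auto
  ultimately show ?thesis
    using transition_measure_ratio_less_1[OF _ _ spread] by simp
qed

end

theorem proposition1:
  fixes M :: "'a measure" and T :: "'a \<Rightarrow> 'a" and \<Phi> :: "'a \<Rightarrow> real"
  assumes "det_system M T"
    and "measure_preserving M T"
    and "ergodic M T"
    and "\<not> (\<exists>n::nat. \<exists>C\<in>sets M. n \<ge> 1 \<and> 0 < measure M C \<and> measure M C < 1 \<and>
                 measure M (symdiff ((T ^^ n) ` C) C) = 0)"
    and "nontrivial_finite_obs M \<Phi>"
  shows "\<exists>oi\<in>\<Phi> ` space M. \<forall>oj\<in>\<Phi> ` space M. \<forall>t::int.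
           measure M {m \<in> space M. \<Phi> (Tpow M T t m) = oi \<and> \<Phi> (Tpow M T (t + 1) m) = oj}
           / measure M {m \<in> space M. \<Phi> (Tpow M T t m) = oi} < 1"
proof -
  interpret invertible_mp_system M T
    using assms(1,2) unfolding det_system_def measure_preserving_def invertible_mp_system_def
      invertible_mp_system_axioms_def by auto
  obtain \<alpha> val where part: "partition M \<alpha>" and val: "inj_on val \<alpha>"
    and \<Phi>: "\<forall>x\<in>space M. \<Phi> x = (\<Sum>A\<in>\<alpha>. val A * indicator A x)" and card: "2 \<le> card \<alpha>"
    using assms(5) unfolding nontrivial_finite_obs_def finite_obs_def by blast
  obtain A where "A \<in> \<alpha>" "\<forall>B\<in>\<alpha>. 0 < measure M (T ` A - B)"
    using ex_cell_image_not_null_diff[OF part card assms(4)] by blast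
  then show ?thesis
    unfolding finite_obs_image[OF part val \<Phi>]
    using finite_obs_transition_ratio_less_1[OF part val \<Phi>] by blast
qed

end
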